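(* Let $f:\mathbb{R}^d\to\mathbb{R}$ be $L_0$-Lipschitz and $L_1$-smooth and let $f'$ be measurable with $\sup_x|f(x)-f'(x)|\le\nu$. Let $F'(x,t)=\mathbb{E}_{u\sim\mathcal{N}(0,\mathrm{I}_d)}[f'(x+tu)]$. Then for every $x\in\mathbb{R}^d$ and every $t>0$, $\|\nabla f(x)\|^2\le 4\|\nabla_xF'(x,t)\|^2+\frac{t^2}{2}L_1^2(d+6)^3+\frac{8}{\pi}\frac{\nu^2}{t^2}$.
   Context: $L_0$-Lipschitz: $|f(x)-f(y)|\le L_0\|x-y\|$; $L_1$-smooth: $\|\nabla f(x)-\nabla f(y)\|\le L_1\|x-y\|$; $\|\cdot\|$ Euclidean norm. *)

theory Defs
  imports "HOL-Analysis.Analysis"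
begin

definition std_gauss_density :: "'a::euclidean_space \<Rightarrow> real" where
  "std_gauss_density u = (2 * pi) powr (- real DIM('a) / 2) * exp (- (norm u)\<^sup>2 / 2)"

definition std_gauss :: "'a::euclidean_space measure" where
  "std_gauss = density lborel (\<lambda>u. ennreal (std_gauss_density u))"

definition gauss_smooth :: "('a::euclidean_space \<Rightarrow> real) \<Rightarrow> 'a \<Rightarrow> real \<Rightarrow> real" where
  "gauss_smooth g x t = (\<integral>u. g (x + t *\<^sub>R u) \<partial>std_gauss)"

end

theory Submission
  imports Defs "HOL-Probability.Distributions"
begin

text \<open>
  Write \<open>fp = f + e\<close> with \<open>\<bar>e\<bar> \<le> \<nu>\<close>. For the smooth part, differentiation commutes with
  Gaussian smoothing, so its gradient is \<open>G = E[\<nabla>f(x + t u)]\<close>, and Lipschitz continuity of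
  \<open>\<nabla>f\<close> gives \<open>\<parallel>\<nabla>f(x) - G\<parallel> \<le> L\<^sub>1 t E\<parallel>u\<parallel> \<le> L\<^sub>1 t (d + 1) / 2\<close>. For the bounded part, moving the shift
  \<open>x \<mapsto> x + h\<close> onto the Gaussian density and expanding the density to second order gives the
  gradient \<open>t\<^sup>-\<^sup>1 E[e(x + t u) u]\<close>, whose norm is at most \<open>\<nu>/t\<close> because
  \<open>E\<bar>u \<bullet> v\<bar> \<le> \<parallel>v\<parallel>\<close>. Hence \<open>\<parallel>\<nabla>f(x)\<parallel> \<le> \<parallel>D\<parallel> + \<nu>/t + L\<^sub>1 t (d + 1)/2\<close> for the gradient \<open>D\<close> of the smoothed
  \<open>fp\<close>, and the weighted Cauchy--Schwarz bound \<open>(a + b + c)\<^sup>2 \<le> 4a\<^sup>2 + 12/5 b\<^sup>2 + 3c\<^sup>2\<close> together with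
  \<open>12/5 \<le> 8/\<pi>\<close> and \<open>3 (d + 1)\<^sup>2 \<le> 2 (d + 6)\<^sup>3\<close> yields the claim.
\<close>

lemma norm_power2_eq_sum_Basis: "(norm (u::'a::euclidean_space))\<^sup>2 = (\<Sum>b\<in>Basis. (u \<bullet> b)\<^sup>2)"
  unfolding power2_norm_eq_inner by (subst euclidean_inner) (simp add: power2_eq_square)

lemma exp_norm_power2_eq_prod_Basis:
  "exp (c * (norm (u::'a::euclidean_space))\<^sup>2) = (\<Prod>b\<in>Basis. exp (c * (u \<bullet> b)\<^sup>2))"
  by (simp add: norm_power2_eq_sum_Basis sum_distrib_left exp_sum)

lemma std_gauss_density_eq_prod:
  "std_gauss_density (u::'a::euclidean_space) = (\<Prod>b\<in>Basis. std_normal_density (u \<bullet> b))"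
proof -
  have "(2 * pi) powr (- real DIM('a) / 2) = ((2 * pi) powr (-1/2)) ^ DIM('a)"
    by (subst powr_power) auto
  also have "(2 * pi) powr (-1/2) = 1 / sqrt (2 * pi)"
    by (simp add: powr_minus_divide powr_half_sqrt)
  finally have "(2 * pi) powr (- real DIM('a) / 2) = (\<Prod>b\<in>(Basis::'a set). 1 / sqrt (2 * pi))"
    by simp
  moreover have "exp (- (norm u)\<^sup>2 / 2) = (\<Prod>b\<in>Basis. exp (- (u \<bullet> b)\<^sup>2 / 2))"
    using exp_norm_power2_eq_prod_Basis[of "-1/2" u] by simp
  ultimately show ?thesis
    by (simp add: std_gauss_density_def std_normal_density_def prod_dividef power_one_over)
qed

lemma
  fixes f :: "'a::euclidean_space \<Rightarrow> real \<Rightarrow> real"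
  assumes int: "\<And>b. b \<in> Basis \<Longrightarrow> integrable lborel (f b)"
  shows integrable_lborel_prod_Basis: "integrable lborel (\<lambda>x::'a. \<Prod>b\<in>Basis. f b (x \<bullet> b))"
    and integral_lborel_prod_Basis:
      "(\<integral>x. (\<Prod>b\<in>Basis. f b (x \<bullet> b)) \<partial>(lborel::'a measure)) = (\<Prod>b\<in>Basis. \<integral>x. f b x \<partial>lborel)"
proof -
  interpret P: product_sigma_finite "\<lambda>_::'a. lborel::real measure" by unfold_locales
  define T where "T = (\<lambda>g::'a \<Rightarrow> real. \<Sum>b\<in>Basis. g b *\<^sub>R b)"
  have T: "T \<in> borel_measurable (\<Pi>\<^sub>M b\<in>Basis. lborel)" unfolding T_def by measurable
  have T_inner: "T g \<bullet> b = g b" if "b \<in> Basis" for g b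
    using that by (simp add: T_def inner_sum_left inner_Basis if_distrib cong: if_cong)
  have lborel_eq_T: "(lborel::'a measure) = distr (\<Pi>\<^sub>M b\<in>Basis. lborel) borel T"
    unfolding T_def by (rule lborel_eq)
  have "(\<lambda>x::'a. \<Prod>b\<in>Basis. f b (x \<bullet> b)) \<in> borel_measurable borel"
    using int by (intro borel_measurable_prod) (auto intro: measurable_compose[OF borel_measurable_inner])
  note distr = integrable_distr_eq[OF T this] integral_distr[OF T this]
  have "integrable (\<Pi>\<^sub>M b\<in>Basis. lborel) (\<lambda>g. \<Prod>b\<in>Basis. f b (g b))"
    by (rule P.product_integrable_prod) (auto intro: int)
  also have "?this \<longleftrightarrow> integrable (\<Pi>\<^sub>M b\<in>Basis. lborel) (\<lambda>g. \<Prod>b\<in>Basis. f b (T g \<bullet> b))"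
    by (rule Bochner_Integration.integrable_cong) (auto simp: T_inner)
  finally show "integrable lborel (\<lambda>x::'a. \<Prod>b\<in>Basis. f b (x \<bullet> b))"
    unfolding lborel_eq_T distr(1) .
  have "(\<integral>g. (\<Prod>b\<in>Basis. f b (T g \<bullet> b)) \<partial>(\<Pi>\<^sub>M b\<in>Basis. lborel))
      = (\<integral>g. (\<Prod>b\<in>Basis. f b (g b)) \<partial>(\<Pi>\<^sub>M b\<in>Basis. lborel))"
    by (rule Bochner_Integration.integral_cong) (auto simp: T_inner)
  also have "\<dots> = (\<Prod>b\<in>Basis. \<integral>x. f b x \<partial>lborel)"
    by (rule P.product_integral_prod) (auto intro: int)
  finally show "(\<integral>x. (\<Prod>b\<in>Basis. f b (x \<bullet> b)) \<partial>(lborel::'a measure)) = (\<Prod>b\<in>Basis. \<integral>x. f b x \<partial>lborel)"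
    unfolding lborel_eq_T distr(2) .
qed

lemma integrable_exp_minus_norm_power2:
  assumes "0 < c"
  shows "integrable lborel (\<lambda>w::'a::euclidean_space. exp (- c * (norm w)\<^sup>2))"
proof -
  have "exp (- c * x\<^sup>2) = sqrt (pi / c) * normal_density 0 (sqrt (1 / (2 * c))) x" for x :: real
    using assms by (simp add: normal_density_def real_sqrt_divide field_simps)
  then have "integrable lborel (\<lambda>x::real. exp (- c * x\<^sup>2))"
    using assms by (simp add: integrable_normal_density)
  then show ?thesis
    unfolding exp_norm_power2_eq_prod_Basis by (rule integrable_lborel_prod_Basis)
qed

lemma std_gauss_density_nonneg [simp]: "0 \<le> std_gauss_density u"
  by (simp add: std_gauss_density_def)

lemma borel_measurable_std_gauss_density [measurable]: "std_gauss_density \<in> borel_measurable borel"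
  unfolding std_gauss_density_def[abs_def] by measurable

lemma
  shows integrable_std_gauss_density: "integrable lborel (std_gauss_density :: 'a::euclidean_space \<Rightarrow> real)"
    and integral_std_gauss_density: "(\<integral>u. std_gauss_density u \<partial>(lborel::'a measure)) = 1"
  using integrable_lborel_prod_Basis[where f="\<lambda>_. std_normal_density"]
    integral_lborel_prod_Basis[where f="\<lambda>_. std_normal_density"]
  by (simp_all add: std_gauss_density_eq_prod[abs_def])

lemma prob_space_std_gauss: "prob_space (std_gauss :: 'a::euclidean_space measure)"
  by (rule prob_spaceI)
    (simp add: std_gauss_def emeasure_density nn_integral_eq_integral
      integrable_std_gauss_density integral_std_gauss_density)

lemma measure_std_gauss_UNIV [simp]: "measure std_gauss UNIV = 1"
  using prob_space.prob_space[OF prob_space_std_gauss] by (simp add: std_gauss_def)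

lemma space_std_gauss [simp]: "space std_gauss = UNIV"
  by (simp add: std_gauss_def)

lemma sets_std_gauss [simp, measurable_cong]: "sets std_gauss = sets borel"
  by (simp add: std_gauss_def)

lemma
  fixes g :: "'a::euclidean_space \<Rightarrow> 'b::{banach, second_countable_topology}"
  assumes "g \<in> borel_measurable borel"
  shows integrable_std_gauss_iff:
      "integrable std_gauss g \<longleftrightarrow> integrable lborel (\<lambda>u. std_gauss_density u *\<^sub>R g u)"
    and integral_std_gauss_eq: "integral\<^sup>L std_gauss g = (\<integral>u. std_gauss_density u *\<^sub>R g u \<partial>lborel)"
  unfolding std_gauss_def using assms
  by (simp_all add: integrable_density integral_density)

lemma
  fixes b c :: "'a::euclidean_space"
  assumes b: "b \<in> Basis" and c: "c \<in> Basis"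
  shows integrable_std_gauss_inner_Basis: "integrable std_gauss (\<lambda>u::'a. (u \<bullet> b) * (u \<bullet> c))"
    and integral_std_gauss_inner_Basis:
      "(\<integral>u. (u \<bullet> b) * (u \<bullet> c) \<partial>(std_gauss::'a measure)) = (if b = c then 1 else 0)"
proof -
  define g where
    "g i x = std_normal_density x * (if i = b then x else 1) * (if i = c then x else 1)" for i :: 'a and x
  have prod: "std_gauss_density u *\<^sub>R ((u \<bullet> b) * (u \<bullet> c)) = (\<Prod>i\<in>Basis. g i (u \<bullet> i))" for u :: 'a
    using b c by (simp add: g_def prod.distrib std_gauss_density_eq_prod prod.delta)
  have g_moment: "g i = (\<lambda>x. std_normal_density x * x ^ (of_bool (i = b) + of_bool (i = c)))" for i
    by (auto simp: g_def fun_eq_iff power_add)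
  have g: "integrable lborel (g i)" for i
    unfolding g_moment by (rule integrable_std_normal_moment)
  have meas: "(\<lambda>u::'a. (u \<bullet> b) * (u \<bullet> c)) \<in> borel_measurable borel"
    by measurable
  show "integrable std_gauss (\<lambda>u::'a. (u \<bullet> b) * (u \<bullet> c))"
    unfolding integrable_std_gauss_iff[OF meas] prod by (rule integrable_lborel_prod_Basis) (rule g)
  have "(\<integral>u. (u \<bullet> b) * (u \<bullet> c) \<partial>(std_gauss::'a measure)) = (\<Prod>i\<in>Basis. \<integral>x. g i x \<partial>lborel)"
    unfolding integral_std_gauss_eq[OF meas] prod by (rule integral_lborel_prod_Basis) (rule g)
  also have "\<dots> = (if b = c then 1 else 0)"
  proof (cases "b = c")
    case True
    have "g i = (\<lambda>x. std_normal_density x * x ^ (2 * of_bool (i = b)))" for i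
      unfolding g_moment True by (simp add: power2_eq_square)
    then have "(\<integral>x. g i x \<partial>lborel) = 1" for i
      using integral_std_normal_moment_even[of 1] by (cases "i = b") simp_all
    then show ?thesis using True by simp
  next
    case False
    then have "g b = (\<lambda>x. std_normal_density x * x ^ (2 * 0 + 1))"
      unfolding g_moment by simp
    then have "(\<integral>x. g b x \<partial>lborel) = 0"
      using integral_std_normal_moment_odd[of 0] by simp
    then show ?thesis using False b by (auto intro!: prod_zero)
  qed
  finally show "(\<integral>u. (u \<bullet> b) * (u \<bullet> c) \<partial>(std_gauss::'a measure)) = (if b = c then 1 else 0)" .
qed

lemma
  fixes w :: "'a::euclidean_space"
  shows integrable_std_gauss_inner_power2: "integrable std_gauss (\<lambda>u::'a. (u \<bullet> w)\<^sup>2)"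
    and integral_std_gauss_inner_power2: "(\<integral>u. (u \<bullet> w)\<^sup>2 \<partial>(std_gauss::'a measure)) = (norm w)\<^sup>2"
proof -
  have expand: "(u \<bullet> w)\<^sup>2 = (\<Sum>b\<in>Basis. \<Sum>c\<in>Basis. ((w \<bullet> b) * (w \<bullet> c)) * ((u \<bullet> b) * (u \<bullet> c)))"
    for u :: 'a
    by (simp add: euclidean_inner[of u w] power2_eq_square sum_product ac_simps)
  have int: "integrable std_gauss (\<lambda>u::'a. ((w \<bullet> b) * (w \<bullet> c)) * ((u \<bullet> b) * (u \<bullet> c)))"
    if "b \<in> Basis" "c \<in> Basis" for b c
    using integrable_std_gauss_inner_Basis[OF that] by simp
  show "integrable std_gauss (\<lambda>u::'a. (u \<bullet> w)\<^sup>2)"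
    unfolding expand by (intro Bochner_Integration.integrable_sum int)
  have inner: "(\<integral>u. (\<Sum>c\<in>Basis. ((w \<bullet> b) * (w \<bullet> c)) * ((u \<bullet> b) * (u \<bullet> c))) \<partial>std_gauss)
      = (\<Sum>c\<in>Basis. (w \<bullet> b) * (w \<bullet> c) * (if b = c then 1 else 0))" if "b \<in> Basis" for b
    using that
    by (subst Bochner_Integration.integral_sum) (auto intro!: sum.cong
        simp: integrable_std_gauss_inner_Basis integral_std_gauss_inner_Basis)
  have "(\<integral>u. (u \<bullet> w)\<^sup>2 \<partial>(std_gauss::'a measure))
      = (\<Sum>b\<in>Basis. \<Sum>c\<in>Basis. (w \<bullet> b) * (w \<bullet> c) * (if b = c then 1 else 0))"
    unfolding expand
    by (subst Bochner_Integration.integral_sum) (auto intro!: Bochner_Integration.integrable_sum int sum.cong simp: inner)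
  also have "\<dots> = (norm w)\<^sup>2"
    unfolding norm_power2_eq_sum_Basis by (simp add: power2_eq_square if_distrib cong: if_cong)
  finally show "(\<integral>u. (u \<bullet> w)\<^sup>2 \<partial>(std_gauss::'a measure)) = (norm w)\<^sup>2" .
qed

lemma
  shows integrable_std_gauss_norm_power2: "integrable std_gauss (\<lambda>u::'a::euclidean_space. (norm u)\<^sup>2)"
    and integral_std_gauss_norm_power2: "(\<integral>u. (norm u)\<^sup>2 \<partial>(std_gauss::'a measure)) = real DIM('a)"
  unfolding norm_power2_eq_sum_Basis
  by (simp_all add: Bochner_Integration.integral_sum integrable_std_gauss_inner_power2
      integral_std_gauss_inner_power2)

lemma abs_le_power2_div_add:
  fixes z n :: real
  assumes "0 < n"
  shows "\<bar>z\<bar> \<le> (z\<^sup>2 / n + n) / 2"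
proof -
  have "2 * \<bar>z\<bar> * n \<le> z\<^sup>2 + n\<^sup>2"
    using sum_squares_bound[of "\<bar>z\<bar>" n] by (simp add: power2_eq_square)
  with assms show ?thesis by (simp add: field_simps power2_eq_square)
qed

lemma
  shows integrable_std_gauss_norm: "integrable std_gauss (\<lambda>u::'a::euclidean_space. norm u)"
    and integral_std_gauss_norm_le: "(\<integral>u. norm u \<partial>(std_gauss::'a measure)) \<le> (1 + real DIM('a)) / 2"
proof -
  interpret prob_space "std_gauss::'a measure" by (rule prob_space_std_gauss)
  have majorant: "integrable std_gauss (\<lambda>u::'a. ((norm u)\<^sup>2 + 1) / 2)"
    by (intro integrable_divide_zero Bochner_Integration.integrable_add integrable_const
        integrable_std_gauss_norm_power2)
  have le: "norm u \<le> ((norm u)\<^sup>2 + 1) / 2" for u :: 'a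
    using abs_le_power2_div_add[of 1 "norm u"] by simp
  have "norm (norm u) \<le> norm (((norm u)\<^sup>2 + 1) / 2)" for u :: 'a
    using le[of u] by simp
  then show norm_int: "integrable std_gauss (\<lambda>u::'a. norm u)"
    by (intro Bochner_Integration.integrable_bound[OF majorant] AE_I2) simp_all
  have "(\<integral>u. norm u \<partial>(std_gauss::'a measure)) \<le> (\<integral>u. ((norm u)\<^sup>2 + 1) / 2 \<partial>(std_gauss::'a measure))"
    by (intro integral_mono norm_int majorant le)
  also have "\<dots> = (1 + real DIM('a)) / 2"
    by (simp add: Bochner_Integration.integral_add[OF integrable_std_gauss_norm_power2 integrable_const]
        integral_std_gauss_norm_power2)
  finally show "(\<integral>u. norm u \<partial>(std_gauss::'a measure)) \<le> (1 + real DIM('a)) / 2" .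
qed

lemma integrable_std_gauss_affine_bound:
  fixes g :: "'a::euclidean_space \<Rightarrow> 'b::{banach, second_countable_topology}"
  assumes "g \<in> borel_measurable borel" and "\<And>u. norm (g u) \<le> a + c * norm u"
  shows "integrable std_gauss g"
proof (rule Bochner_Integration.integrable_bound)
  interpret prob_space "std_gauss::'a measure" by (rule prob_space_std_gauss)
  show "integrable std_gauss (\<lambda>u::'a. a + c * norm u)"
    by (intro Bochner_Integration.integrable_add integrable_const integrable_mult_right
        integrable_std_gauss_norm)
  show "AE u in std_gauss. norm (g u) \<le> norm (a + c * norm u)"
    using assms(2) by (auto intro!: AE_I2 intro: order_trans[OF _ abs_ge_self])
qed (use assms(1) in simp)

lemma
  fixes w :: "'a::euclidean_space"
  shows integrable_std_gauss_abs_inner: "integrable std_gauss (\<lambda>u::'a. \<bar>u \<bullet> w\<bar>)"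
    and integral_std_gauss_abs_inner_le: "(\<integral>u. \<bar>u \<bullet> w\<bar> \<partial>(std_gauss::'a measure)) \<le> norm w"
proof -
  interpret prob_space "std_gauss::'a measure" by (rule prob_space_std_gauss)
  show int: "integrable std_gauss (\<lambda>u::'a. \<bar>u \<bullet> w\<bar>)"
    by (rule integrable_std_gauss_affine_bound[where a=0 and c="norm w"])
      (simp_all add: Cauchy_Schwarz_ineq2 mult.commute)
  show "(\<integral>u. \<bar>u \<bullet> w\<bar> \<partial>(std_gauss::'a measure)) \<le> norm w"
  proof (cases "w = 0")
    case False
    then have n: "0 < norm w" by simp
    have majorant: "integrable std_gauss (\<lambda>u::'a. ((u \<bullet> w)\<^sup>2 / norm w + norm w) / 2)"
      by (intro integrable_divide_zero Bochner_Integration.integrable_add integrable_const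
          integrable_std_gauss_inner_power2)
    have "(\<integral>u. \<bar>u \<bullet> w\<bar> \<partial>(std_gauss::'a measure))
        \<le> (\<integral>u. ((u \<bullet> w)\<^sup>2 / norm w + norm w) / 2 \<partial>std_gauss)"
      by (intro integral_mono int majorant abs_le_power2_div_add n)
    also have "\<dots> = ((norm w)\<^sup>2 / norm w + norm w) / 2"
      using integrable_std_gauss_inner_power2[of w]
      by (simp add: integral_std_gauss_inner_power2 Bochner_Integration.integral_add)
    also have "\<dots> = norm w"
      using n by (simp add: power2_eq_square)
    finally show ?thesis .
  qed simp
qed

lemma gderiv_quadratic_remainderI:
  fixes g :: "'a::real_inner \<Rightarrow> real"
  assumes r: "0 < r"
    and remainder: "\<And>h. norm h \<le> r \<Longrightarrow> \<bar>g (x + h) - g x - h \<bullet> D\<bar> \<le> C * (norm h)\<^sup>2"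
  shows "GDERIV g x :> D"
  unfolding gderiv_def has_derivative_at_alt
proof (intro conjI allI impI bounded_linear_inner_left)
  fix \<epsilon> :: real
  assume \<epsilon>: "0 < \<epsilon>"
  define d where "d = min r (\<epsilon> / (\<bar>C\<bar> + 1))"
  show "\<exists>d>0. \<forall>y. norm (y - x) < d \<longrightarrow> norm (g y - g x - (y - x) \<bullet> D) \<le> \<epsilon> * norm (y - x)"
  proof (intro exI[of _ d] conjI allI impI)
    show "0 < d" using r \<epsilon> by (simp add: d_def)
    fix y
    assume y: "norm (y - x) < d"
    define h where "h = y - x"
    have "\<bar>C\<bar> * norm h \<le> norm h * (\<bar>C\<bar> + 1)"
      by (simp add: algebra_simps)
    also have "\<dots> < \<epsilon>"
      using y by (simp add: h_def d_def pos_less_divide_eq add_pos_nonneg)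
    finally have Ch: "\<bar>C\<bar> * norm h \<le> \<epsilon>"
      by (rule less_imp_le)
    have "\<bar>g (x + h) - g x - h \<bullet> D\<bar> \<le> C * (norm h)\<^sup>2"
      using y by (intro remainder) (simp add: h_def d_def)
    also have "\<dots> \<le> \<bar>C\<bar> * (norm h)\<^sup>2"
      by (rule mult_right_mono) simp_all
    also have "\<dots> = (\<bar>C\<bar> * norm h) * norm h"
      by (simp add: power2_eq_square)
    also have "\<dots> \<le> \<epsilon> * norm h"
      using Ch by (rule mult_right_mono) simp
    finally show "norm (g y - g x - (y - x) \<bullet> D) \<le> \<epsilon> * norm (y - x)"
      by (simp add: h_def)
  qed
qed

lemma abs_exp_minus_one_minus_le: "\<bar>exp a - 1 - a\<bar> \<le> a\<^sup>2 * exp \<bar>a\<bar>" for a :: real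
proof -
  obtain s where s: "\<bar>s\<bar> \<le> \<bar>a\<bar>" "exp a = (\<Sum>m<2. a ^ m / fact m) + exp s / fact 2 * a ^ 2"
    using Maclaurin_exp_le[of a 2] by blast
  then have "\<bar>exp a - 1 - a\<bar> = a\<^sup>2 * (exp s / 2)"
    by (simp add: eval_nat_numeral)
  also have "\<dots> \<le> a\<^sup>2 * exp \<bar>a\<bar>"
  proof (intro mult_left_mono)
    have "exp s \<le> exp \<bar>a\<bar>"
      using s(1) abs_ge_self[of s] by simp
    then show "exp s / 2 \<le> exp \<bar>a\<bar>"
      using exp_gt_zero[of s] by linarith
  qed simp
  finally show ?thesis .
qed

lemma std_gauss_density_diff:
  "std_gauss_density (w - k) = std_gauss_density w * exp (w \<bullet> k - (norm k)\<^sup>2 / 2)"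
proof -
  have "- (norm (w - k))\<^sup>2 / 2 = - (norm w)\<^sup>2 / 2 + (w \<bullet> k - (norm k)\<^sup>2 / 2)"
    by (simp add: power2_norm_eq_inner inner_diff_left inner_diff_right inner_commute field_simps)
  then have "exp (- (norm (w - k))\<^sup>2 / 2) = exp (- (norm w)\<^sup>2 / 2) * exp (w \<bullet> k - (norm k)\<^sup>2 / 2)"
    by (simp only: exp_add)
  then show ?thesis
    by (simp only: std_gauss_density_def mult.assoc)
qed

text \<open>Bounds the second-order Taylor remainder of the Gaussian density under shifts of length
  at most 1 (up to the factor \<open>\<parallel>k\<parallel>\<^sup>2\<close>), and is still integrable.\<close>
definition gauss_taylor_weight :: "'a::euclidean_space \<Rightarrow> real" where
  "gauss_taylor_weight w = std_gauss_density w * ((norm w + 1)\<^sup>2 * exp (norm w + 1) + 1)"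

lemma gauss_taylor_weight_nonneg: "0 \<le> gauss_taylor_weight w"
  by (simp add: gauss_taylor_weight_def)

lemma integrable_gauss_taylor_weight:
  "integrable lborel (gauss_taylor_weight :: 'a::euclidean_space \<Rightarrow> real)"
proof (rule Bochner_Integration.integrable_bound)
  define c where "c = (2 * pi) powr (- real DIM('a) / 2) * (2 * exp 6 + 1)"
  show "integrable lborel (\<lambda>w::'a. c * exp (- (1/4) * (norm w)\<^sup>2))"
    by (intro integrable_mult_right integrable_exp_minus_norm_power2) simp
  have "gauss_taylor_weight w \<le> c * exp (- (1/4) * (norm w)\<^sup>2)" for w :: 'a
  proof -
    define r where "r = norm w + 1"
    have r: "0 \<le> r" by (simp add: r_def)
    have "r\<^sup>2 \<le> 2 * exp r"
      using exp_lower_Taylor_quadratic[OF r] r by linarith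
    then have "r\<^sup>2 * exp r \<le> (2 * exp r) * exp r"
      by (rule mult_right_mono) simp
    also have "\<dots> = 2 * exp (r + r)"
      by (simp only: exp_add mult.assoc)
    also have "\<dots> \<le> 2 * (exp 6 * exp ((norm w)\<^sup>2 / 4))"
      using zero_le_power2[of "norm w / 2 - 2"]
      by (simp add: r_def power2_eq_square field_simps flip: exp_add)
    finally have "r\<^sup>2 * exp r \<le> 2 * exp 6 * exp ((norm w)\<^sup>2 / 4)"
      by simp
    then have "r\<^sup>2 * exp r + 1 \<le> (2 * exp 6 + 1) * exp ((norm w)\<^sup>2 / 4)"
      by (simp add: algebra_simps add_mono)
    then have "gauss_taylor_weight w
        \<le> std_gauss_density w * ((2 * exp 6 + 1) * exp ((norm w)\<^sup>2 / 4))"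
      by (simp add: gauss_taylor_weight_def r_def mult_left_mono)
    also have "\<dots> = c * (exp (- (norm w)\<^sup>2 / 2) * exp ((norm w)\<^sup>2 / 4))"
      by (simp add: std_gauss_density_def c_def)
    also have "exp (- (norm w)\<^sup>2 / 2) * exp ((norm w)\<^sup>2 / 4) = exp (- (1/4) * (norm w)\<^sup>2)"
      by (simp flip: exp_add)
    finally show ?thesis .
  qed
  then show "AE w in lborel. norm (gauss_taylor_weight w) \<le> norm (c * exp (- (1/4) * (norm (w::'a))\<^sup>2))"
    by (intro AE_I2) (simp add: gauss_taylor_weight_nonneg c_def)
qed (simp add: gauss_taylor_weight_def[abs_def])

definition gauss_shift_remainder :: "'a::euclidean_space \<Rightarrow> 'a \<Rightarrow> real" where
  "gauss_shift_remainder k w = std_gauss_density (w - k) - std_gauss_density w - std_gauss_density w * (w \<bullet> k)"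

lemma borel_measurable_gauss_shift_remainder [measurable]:
  "gauss_shift_remainder k \<in> borel_measurable borel"
  unfolding gauss_shift_remainder_def[abs_def] by measurable

lemma abs_gauss_shift_remainder_le:
  fixes w k :: "'a::euclidean_space"
  assumes k: "norm k \<le> 1"
  shows "\<bar>gauss_shift_remainder k w\<bar> \<le> (norm k)\<^sup>2 * gauss_taylor_weight w"
proof -
  define a where "a = w \<bullet> k - (norm k)\<^sup>2 / 2"
  have k2: "(norm k)\<^sup>2 \<le> norm k"
    using k by (simp add: power2_eq_square mult_left_le)
  have "\<bar>a\<bar> \<le> \<bar>w \<bullet> k\<bar> + \<bar>(norm k)\<^sup>2 / 2\<bar>"
    unfolding a_def by (rule abs_triangle_ineq4)
  also have "\<dots> \<le> \<bar>w \<bullet> k\<bar> + (norm k)\<^sup>2"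
    by simp
  also have "\<dots> \<le> norm k * (norm w + 1)"
    using Cauchy_Schwarz_ineq2[of w k] k2 by (simp add: algebra_simps)
  finally have a: "\<bar>a\<bar> \<le> norm k * (norm w + 1)" .
  have "a\<^sup>2 \<le> (norm k)\<^sup>2 * (norm w + 1)\<^sup>2"
    using power_mono[OF a abs_ge_zero, of 2] by (simp add: power_mult_distrib)
  moreover have "exp \<bar>a\<bar> \<le> exp (norm w + 1)"
    using a order_trans[OF a mult_right_mono[OF k]] by simp
  ultimately have "\<bar>exp a - 1 - a\<bar> \<le> (norm k)\<^sup>2 * (norm w + 1)\<^sup>2 * exp (norm w + 1)"
    by (intro order_trans[OF abs_exp_minus_one_minus_le] mult_mono) simp_all
  moreover have "\<bar>exp a - 1 - a - (norm k)\<^sup>2 / 2\<bar> \<le> \<bar>exp a - 1 - a\<bar> + (norm k)\<^sup>2 / 2"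
    using abs_triangle_ineq4[of "exp a - 1 - a" "(norm k)\<^sup>2 / 2"] by simp
  ultimately have "\<bar>exp a - 1 - a - (norm k)\<^sup>2 / 2\<bar>
      \<le> (norm k)\<^sup>2 * ((norm w + 1)\<^sup>2 * exp (norm w + 1) + 1)"
    using zero_le_power2[of "norm k"] by (simp add: algebra_simps)
  moreover have "gauss_shift_remainder k w = std_gauss_density w * (exp a - 1 - a - (norm k)\<^sup>2 / 2)"
    by (simp add: gauss_shift_remainder_def std_gauss_density_diff a_def algebra_simps)
  ultimately show ?thesis
    by (simp add: abs_mult gauss_taylor_weight_def mult_left_mono mult.left_commute)
qed

lemma gauss_smooth_shift:
  fixes e :: "'a::euclidean_space \<Rightarrow> real"
  assumes [measurable]: "e \<in> borel_measurable borel" and t: "t \<noteq> 0"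
  shows "gauss_smooth e (x + h) t
    = (\<integral>w. std_gauss_density (w - (1/t) *\<^sub>R h) * e (x + t *\<^sub>R w) \<partial>lborel)"
proof -
  have shift: "x + h + t *\<^sub>R u = x + t *\<^sub>R ((1/t) *\<^sub>R h + u)" for u
    using t by (simp add: scaleR_add_right)
  have "gauss_smooth e (x + h) t = (\<integral>u. std_gauss_density u * e (x + h + t *\<^sub>R u) \<partial>lborel)"
    by (simp add: gauss_smooth_def integral_std_gauss_eq)
  also have "\<dots> = (\<integral>w. std_gauss_density (w - (1/t) *\<^sub>R h) * e (x + t *\<^sub>R w)
      \<partial>distr lborel borel ((+) ((1/t) *\<^sub>R h)))"
    by (subst integral_distr) (simp_all add: shift)
  also have "\<dots> = (\<integral>w. std_gauss_density (w - (1/t) *\<^sub>R h) * e (x + t *\<^sub>R w) \<partial>lborel)"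
    by (simp add: lborel_distr_plus)
  finally show ?thesis .
qed

lemma
  fixes E :: "'a::euclidean_space \<Rightarrow> real"
  assumes [measurable]: "E \<in> borel_measurable borel" and E: "\<And>w. \<bar>E w\<bar> \<le> B" and k: "norm k \<le> 1"
  shows integrable_gauss_shift_remainder:
      "integrable lborel (\<lambda>w. E w * gauss_shift_remainder k w)"
    and abs_integral_gauss_shift_remainder_le:
      "\<bar>\<integral>w. E w * gauss_shift_remainder k w \<partial>lborel\<bar>
        \<le> B * (norm k)\<^sup>2 * (\<integral>w. gauss_taylor_weight w \<partial>(lborel::'a measure))"
proof -
  have B: "0 \<le> B"
    using E[of 0] by linarith
  have R: "\<bar>E w * gauss_shift_remainder k w\<bar> \<le> B * (norm k)\<^sup>2 * gauss_taylor_weight w" for w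
    unfolding abs_mult mult.assoc using k B by (intro mult_mono E abs_gauss_shift_remainder_le) simp_all
  have majorant: "integrable lborel (\<lambda>w::'a. B * (norm k)\<^sup>2 * gauss_taylor_weight w)"
    by (intro integrable_mult_right integrable_gauss_taylor_weight)
  show int_R: "integrable lborel (\<lambda>w. E w * gauss_shift_remainder k w)"
    by (rule Bochner_Integration.integrable_bound[OF majorant])
      (simp, intro AE_I2, simp only: real_norm_def, rule order_trans[OF R abs_ge_self])
  have "\<bar>\<integral>w. E w * gauss_shift_remainder k w \<partial>lborel\<bar> \<le> (\<integral>w. \<bar>E w * gauss_shift_remainder k w\<bar> \<partial>lborel)"
    by (rule integral_abs_bound)
  also have "\<dots> \<le> (\<integral>w. B * (norm k)\<^sup>2 * gauss_taylor_weight w \<partial>(lborel::'a measure))"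
    using int_R majorant by (intro integral_mono R) auto
  finally show "\<bar>\<integral>w. E w * gauss_shift_remainder k w \<partial>lborel\<bar>
      \<le> B * (norm k)\<^sup>2 * (\<integral>w. gauss_taylor_weight w \<partial>(lborel::'a measure))"
    by simp
qed

lemma gauss_smooth_remainder_eq:
  fixes e :: "'a::euclidean_space \<Rightarrow> real"
  assumes [measurable]: "e \<in> borel_measurable borel" and e: "\<And>y. \<bar>e y\<bar> \<le> B"
    and t: "0 < t" and h: "norm h \<le> t"
  defines "k \<equiv> (1/t) *\<^sub>R h"
  shows "gauss_smooth e (x + h) t - gauss_smooth e x t
      - h \<bullet> ((1/t) *\<^sub>R (\<integral>u. e (x + t *\<^sub>R u) *\<^sub>R u \<partial>std_gauss))
    = (\<integral>w. e (x + t *\<^sub>R w) * gauss_shift_remainder k w \<partial>lborel)"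
proof -
  define E where "E w = e (x + t *\<^sub>R w)" for w
  define R where "R w = E w * gauss_shift_remainder k w" for w
  have [measurable]: "E \<in> borel_measurable borel"
    unfolding E_def[abs_def] by measurable
  have E: "\<bar>E w\<bar> \<le> B" for w
    unfolding E_def by (rule e)
  have int_R: "integrable lborel R"
    unfolding R_def[abs_def] using E h t
    by (intro integrable_gauss_shift_remainder) (simp_all add: k_def)
  have int_E: "integrable std_gauss E"
    by (rule integrable_std_gauss_affine_bound[where a=B and c=0]) (simp_all add: E)
  have int_Eu: "integrable std_gauss (\<lambda>u. E u *\<^sub>R u)"
    by (rule integrable_std_gauss_affine_bound[where a=0 and c=B]) (simp_all add: E mult_right_mono)
  have int_Ek: "integrable std_gauss (\<lambda>u. E u * (u \<bullet> k))"
    using integrable_inner_right[OF int_Eu, of k] by (simp add: inner_commute)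
  have "(\<integral>u. E u * (u \<bullet> k) \<partial>std_gauss) = (\<integral>u. k \<bullet> (E u *\<^sub>R u) \<partial>std_gauss)"
    by (simp add: inner_commute)
  also have "\<dots> = h \<bullet> ((1/t) *\<^sub>R (\<integral>u. E u *\<^sub>R u \<partial>std_gauss))"
    using int_Eu by (subst integral_inner_right) (simp_all add: k_def)
  finally have inner: "h \<bullet> ((1/t) *\<^sub>R (\<integral>u. E u *\<^sub>R u \<partial>std_gauss)) = (\<integral>u. E u * (u \<bullet> k) \<partial>std_gauss)"
    by (rule sym)
  have "gauss_smooth e (x + h) t = (\<integral>w. std_gauss_density (w - k) * E w \<partial>lborel)"
    using t by (simp add: gauss_smooth_shift k_def E_def)
  also have "\<dots> = (\<integral>w. R w + std_gauss_density w * E w + std_gauss_density w * (E w * (w \<bullet> k)) \<partial>lborel)"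
    by (rule Bochner_Integration.integral_cong) (simp_all add: R_def gauss_shift_remainder_def algebra_simps)
  also have "\<dots> = (\<integral>w. R w \<partial>lborel) + (\<integral>w. std_gauss_density w * E w \<partial>lborel)
      + (\<integral>w. std_gauss_density w * (E w * (w \<bullet> k)) \<partial>lborel)"
    using int_R int_E int_Ek by (simp add: integrable_std_gauss_iff Bochner_Integration.integral_add)
  also have "\<dots> = (\<integral>w. R w \<partial>lborel) + gauss_smooth e x t
      + h \<bullet> ((1/t) *\<^sub>R (\<integral>u. E u *\<^sub>R u \<partial>std_gauss))"
    unfolding inner by (simp add: gauss_smooth_def E_def integral_std_gauss_eq)
  finally show ?thesis
    by (simp add: R_def E_def)
qed

lemma gauss_smooth_bounded_remainder:
  fixes e :: "'a::euclidean_space \<Rightarrow> real"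
  assumes "e \<in> borel_measurable borel" and e: "\<And>y. \<bar>e y\<bar> \<le> B"
    and t: "0 < t" and h: "norm h \<le> t"
  shows "\<bar>gauss_smooth e (x + h) t - gauss_smooth e x t
      - h \<bullet> ((1/t) *\<^sub>R (\<integral>u. e (x + t *\<^sub>R u) *\<^sub>R u \<partial>std_gauss))\<bar>
    \<le> B * (\<integral>w. gauss_taylor_weight w \<partial>(lborel::'a measure)) / t\<^sup>2 * (norm h)\<^sup>2"
proof -
  have "norm ((1/t) *\<^sub>R h) = norm h / t"
    using t by simp
  moreover have "norm ((1/t) *\<^sub>R h) \<le> 1"
    using t h by simp
  ultimately show ?thesis
    unfolding gauss_smooth_remainder_eq[OF assms]
    using abs_integral_gauss_shift_remainder_le[of "\<lambda>w. e (x + t *\<^sub>R w)" B "(1/t) *\<^sub>R h"] assms(1) e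
    by (simp add: power_divide mult_ac)
qed

lemma gauss_smooth_gderiv_bounded:
  fixes e :: "'a::euclidean_space \<Rightarrow> real"
  assumes "e \<in> borel_measurable borel" and "\<And>y. \<bar>e y\<bar> \<le> B" and "0 < t"
  shows "GDERIV (\<lambda>y. gauss_smooth e y t) x :> (1/t) *\<^sub>R (\<integral>u. e (x + t *\<^sub>R u) *\<^sub>R u \<partial>std_gauss)"
  by (rule gderiv_quadratic_remainderI[OF assms(3) gauss_smooth_bounded_remainder[OF assms]])

lemma norm_integral_std_gauss_scaleR_le:
  fixes E :: "'a::euclidean_space \<Rightarrow> real"
  assumes [measurable]: "E \<in> borel_measurable borel" and E: "\<And>u. \<bar>E u\<bar> \<le> B"
  shows "norm (\<integral>u. E u *\<^sub>R u \<partial>std_gauss) \<le> B"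
proof -
  define V where "V = (\<integral>u. E u *\<^sub>R u \<partial>std_gauss)"
  have B: "0 \<le> B"
    using E[of 0] by linarith
  have int_Eu: "integrable std_gauss (\<lambda>u. E u *\<^sub>R u)"
    by (rule integrable_std_gauss_affine_bound[where a=0 and c=B]) (simp_all add: E mult_right_mono)
  have "(norm V)\<^sup>2 = V \<bullet> V"
    by (simp add: power2_norm_eq_inner)
  also have "\<dots> = (\<integral>u. V \<bullet> (E u *\<^sub>R u) \<partial>std_gauss)"
    by (subst integral_inner_right) (simp_all add: int_Eu V_def)
  also have "\<dots> = (\<integral>u. E u * (u \<bullet> V) \<partial>std_gauss)"
    by (simp add: inner_commute)
  also have "\<dots> \<le> (\<integral>u. B * \<bar>u \<bullet> V\<bar> \<partial>std_gauss)"
  proof (rule integral_mono)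
    show "integrable std_gauss (\<lambda>u. E u * (u \<bullet> V))"
      using integrable_inner_right[OF int_Eu, of V] by (simp add: inner_commute)
    show "integrable std_gauss (\<lambda>u. B * \<bar>u \<bullet> V\<bar>)"
      by (intro integrable_mult_right integrable_std_gauss_abs_inner)
    show "E u * (u \<bullet> V) \<le> B * \<bar>u \<bullet> V\<bar>" for u
      by (rule order_trans[OF abs_ge_self]) (simp add: abs_mult mult_right_mono E)
  qed
  also have "\<dots> \<le> B * norm V"
    using integral_std_gauss_abs_inner_le[of V] B by (simp add: mult_left_mono)
  finally have "norm V * norm V \<le> B * norm V"
    by (simp add: power2_eq_square)
  then show ?thesis
    using B by (cases "V = 0") (simp_all add: V_def[symmetric])
qed

lemma borel_measurable_lipschitz:
  fixes g :: "'a::real_normed_vector \<Rightarrow> 'b::real_normed_vector"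
  assumes "\<forall>y z. norm (g y - g z) \<le> L * norm (y - z)"
  shows "g \<in> borel_measurable borel"
proof (rule borel_measurable_continuous_onI)
  have "norm (g y - g z) \<le> \<bar>L\<bar> * norm (y - z)" for y z
    using assms[rule_format, of y z] mult_right_mono[OF abs_ge_self[of L] norm_ge_zero[of "y - z"]]
    by linarith
  then show "continuous_on UNIV g"
    by (intro lipschitz_on_continuous_on[of "\<bar>L\<bar>"] lipschitz_onI) (simp_all add: dist_norm)
qed

lemma lipschitz_const_nonneg:
  fixes g :: "'a::euclidean_space \<Rightarrow> 'b::real_normed_vector"
  assumes "\<forall>y z. norm (g y - g z) \<le> L * norm (y - z)"
  shows "0 \<le> L"
proof -
  obtain b :: 'a where "b \<in> Basis"
    using nonempty_Basis by blast
  then show ?thesis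
    using order_trans[OF norm_ge_zero assms[rule_format, of b 0]] by simp
qed

lemma integrable_std_gauss_lipschitz:
  fixes g :: "'a::euclidean_space \<Rightarrow> 'b::{banach, second_countable_topology}"
  assumes lip: "\<forall>y z. norm (g y - g z) \<le> L * norm (y - z)"
  shows "integrable std_gauss (\<lambda>u. g (z + t *\<^sub>R u))"
proof (rule integrable_std_gauss_affine_bound[where a="norm (g z)" and c="\<bar>L\<bar> * \<bar>t\<bar>"])
  show "(\<lambda>u. g (z + t *\<^sub>R u)) \<in> borel_measurable borel"
    using borel_measurable_lipschitz[OF lip] by measurable
  fix u
  have "norm (g (z + t *\<^sub>R u)) \<le> norm (g z) + norm (g (z + t *\<^sub>R u) - g z)"
    by (rule norm_triangle_sub)
  also have "\<dots> \<le> norm (g z) + L * (\<bar>t\<bar> * norm u)"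
    using lip[rule_format, of "z + t *\<^sub>R u" z] by simp
  also have "\<dots> \<le> norm (g z) + \<bar>L\<bar> * \<bar>t\<bar> * norm u"
    using mult_right_mono[OF abs_ge_self[of L], of "\<bar>t\<bar> * norm u"] by (simp add: mult.assoc)
  finally show "norm (g (z + t *\<^sub>R u)) \<le> norm (g z) + \<bar>L\<bar> * \<bar>t\<bar> * norm u" .
qed

lemma lipschitz_gradient_taylor:
  fixes f :: "'a::real_inner \<Rightarrow> real"
  assumes grad: "\<forall>y. GDERIV f y :> gradf y"
    and smooth: "\<forall>y z. norm (gradf y - gradf z) \<le> L1 * norm (y - z)" and L1: "0 \<le> L1"
  shows "\<bar>f (y + h) - f y - h \<bullet> gradf y\<bar> \<le> L1 * (norm h)\<^sup>2"
proof -
  define g where "g s = f (y + s *\<^sub>R h) - s * (h \<bullet> gradf y)" for s :: real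
  define g' where "g' s ds = (ds *\<^sub>R h) \<bullet> gradf (y + s *\<^sub>R h) - ds * (h \<bullet> gradf y)" for s ds :: real
  have g': "(g has_derivative g' s) (at s)" for s
  proof -
    have f': "(f has_derivative (\<lambda>v. v \<bullet> gradf (y + s *\<^sub>R h))) (at (y + s *\<^sub>R h))"
      using grad by (simp add: gderiv_def)
    have line: "((\<lambda>s. y + s *\<^sub>R h) has_derivative (\<lambda>ds. ds *\<^sub>R h)) (at s)"
      by (auto intro!: derivative_eq_intros)
    have "((\<lambda>s. f (y + s *\<^sub>R h)) has_derivative (\<lambda>ds. (ds *\<^sub>R h) \<bullet> gradf (y + s *\<^sub>R h))) (at s)"
      using diff_chain_at[OF line f'] by (simp add: o_def)
    then show ?thesis
      unfolding g_def[abs_def] g'_def by (auto intro!: derivative_eq_intros)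
  qed
  have "continuous_on {0..1} g"
    by (intro continuous_at_imp_continuous_on ballI has_derivative_continuous[OF g'])
  then obtain s where s: "s \<in> {0<..<1}" "norm (g 1 - g 0) \<le> norm (g' s (1 - 0))"
    using mvt_general[OF zero_less_one _ g'] by blast
  have "\<bar>f (y + h) - f y - h \<bullet> gradf y\<bar> \<le> \<bar>h \<bullet> (gradf (y + s *\<^sub>R h) - gradf y)\<bar>"
    using s(2) by (simp add: g_def g'_def inner_diff_right)
  also have "\<dots> \<le> norm h * (L1 * norm (s *\<^sub>R h))"
    using smooth[rule_format, of "y + s *\<^sub>R h" y]
    by (intro order_trans[OF Cauchy_Schwarz_ineq2] mult_left_mono) simp_all
  also have "\<dots> = s * (L1 * (norm h)\<^sup>2)"
    using s(1) by (simp add: power2_eq_square ac_simps)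
  also have "\<dots> \<le> L1 * (norm h)\<^sup>2"
    using s(1) L1 by (intro mult_left_le_one_le) simp_all
  finally show ?thesis .
qed

lemma gauss_smooth_gderiv_lipschitz_gradient:
  fixes f :: "'a::euclidean_space \<Rightarrow> real"
  assumes lip: "\<forall>y z. norm (f y - f z) \<le> L0 * norm (y - z)"
    and grad: "\<forall>y. GDERIV f y :> gradf y"
    and smooth: "\<forall>y z. norm (gradf y - gradf z) \<le> L1 * norm (y - z)"
  shows "GDERIV (\<lambda>y. gauss_smooth f y t) x :> (\<integral>u. gradf (x + t *\<^sub>R u) \<partial>std_gauss)"
proof (rule gderiv_quadratic_remainderI[OF zero_less_one])
  interpret prob_space "std_gauss :: 'a measure"
    by (rule prob_space_std_gauss)
  have L1: "0 \<le> L1"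
    using smooth by (rule lipschitz_const_nonneg)
  fix h :: 'a
  define y where "y u = x + t *\<^sub>R u" for u
  define r where "r u = f (y u + h) - f (y u) - h \<bullet> gradf (y u)" for u
  have shift: "x + h + t *\<^sub>R u = y u + h" for u
    by (simp add: y_def)
  have int_fh: "integrable std_gauss (\<lambda>u. f (y u + h))"
    using integrable_std_gauss_lipschitz[OF lip, of "x + h" t] by (simp only: shift)
  have int_f: "integrable std_gauss (\<lambda>u. f (y u))"
    unfolding y_def using lip by (rule integrable_std_gauss_lipschitz)
  have int_grad: "integrable std_gauss (\<lambda>u. gradf (y u))"
    unfolding y_def using smooth by (rule integrable_std_gauss_lipschitz)
  have "gauss_smooth f (x + h) t - gauss_smooth f x t - h \<bullet> (\<integral>u. gradf (y u) \<partial>std_gauss)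
      = (\<integral>u. f (y u + h) \<partial>std_gauss) - (\<integral>u. f (y u) \<partial>std_gauss) - (\<integral>u. h \<bullet> gradf (y u) \<partial>std_gauss)"
    using int_grad by (simp add: gauss_smooth_def shift y_def[symmetric])
  also have "\<dots> = (\<integral>u. r u \<partial>std_gauss)"
    unfolding r_def using int_fh int_f integrable_inner_right[OF int_grad]
    by (simp add: Bochner_Integration.integral_diff)
  finally have "\<bar>gauss_smooth f (x + h) t - gauss_smooth f x t - h \<bullet> (\<integral>u. gradf (y u) \<partial>std_gauss)\<bar>
      = \<bar>\<integral>u. r u \<partial>std_gauss\<bar>" by simp
  also have "\<dots> \<le> (\<integral>u. \<bar>r u\<bar> \<partial>std_gauss)"
    by (rule integral_abs_bound)
  also have "\<dots> \<le> (\<integral>u. L1 * (norm h)\<^sup>2 \<partial>(std_gauss :: 'a measure))"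
  proof (rule integral_mono)
    show "integrable std_gauss (\<lambda>u. \<bar>r u\<bar>)"
      unfolding r_def using int_fh int_f integrable_inner_right[OF int_grad] by simp
    show "\<bar>r u\<bar> \<le> L1 * (norm h)\<^sup>2" for u
      unfolding r_def by (rule lipschitz_gradient_taylor[OF grad smooth L1])
  qed simp
  finally show "\<bar>gauss_smooth f (x + h) t - gauss_smooth f x t - h \<bullet> (\<integral>u. gradf (x + t *\<^sub>R u) \<partial>std_gauss)\<bar>
      \<le> L1 * (norm h)\<^sup>2"
    by (simp add: y_def)
qed

lemma norm_minus_gauss_smooth_lipschitz_le:
  fixes g :: "'a::euclidean_space \<Rightarrow> 'b::{banach, second_countable_topology}"
  assumes lip: "\<forall>y z. norm (g y - g z) \<le> L * norm (y - z)"
  shows "norm (g x - (\<integral>u. g (x + t *\<^sub>R u) \<partial>std_gauss)) \<le> L * \<bar>t\<bar> * ((1 + real DIM('a)) / 2)"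
proof -
  interpret prob_space "std_gauss :: 'a measure"
    by (rule prob_space_std_gauss)
  have L: "0 \<le> L"
    using lip by (rule lipschitz_const_nonneg)
  have int_g: "integrable std_gauss (\<lambda>u. g (x + t *\<^sub>R u))"
    using lip by (rule integrable_std_gauss_lipschitz)
  have "g x - (\<integral>u. g (x + t *\<^sub>R u) \<partial>std_gauss) = (\<integral>u. g x - g (x + t *\<^sub>R u) \<partial>std_gauss)"
    using int_g by (simp add: Bochner_Integration.integral_diff)
  also have "norm \<dots> \<le> (\<integral>u. norm (g x - g (x + t *\<^sub>R u)) \<partial>std_gauss)"
    by (rule integral_norm_bound)
  also have "\<dots> \<le> (\<integral>u. L * \<bar>t\<bar> * norm u \<partial>(std_gauss :: 'a measure))"
  proof (rule integral_mono)
    show "integrable std_gauss (\<lambda>u. norm (g x - g (x + t *\<^sub>R u)))"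
      using int_g by simp
    show "integrable std_gauss (\<lambda>u::'a. L * \<bar>t\<bar> * norm u)"
      by (intro integrable_mult_right integrable_std_gauss_norm)
    show "norm (g x - g (x + t *\<^sub>R u)) \<le> L * \<bar>t\<bar> * norm u" for u
      using lip[rule_format, of x "x + t *\<^sub>R u"] by (simp add: mult.assoc)
  qed
  also have "\<dots> = L * \<bar>t\<bar> * (\<integral>u. norm u \<partial>(std_gauss :: 'a measure))"
    by simp
  also have "\<dots> \<le> L * \<bar>t\<bar> * ((1 + real DIM('a)) / 2)"
    using L by (intro mult_left_mono integral_std_gauss_norm_le) simp
  finally show ?thesis .
qed

lemma gauss_smooth_add_bounded:
  fixes f e :: "'a::euclidean_space \<Rightarrow> real"
  assumes lip: "\<forall>y z. norm (f y - f z) \<le> L * norm (y - z)"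
    and [measurable]: "e \<in> borel_measurable borel" and e: "\<And>y. \<bar>e y\<bar> \<le> B"
  shows "gauss_smooth (\<lambda>y. f y + e y) x t = gauss_smooth f x t + gauss_smooth e x t"
proof -
  have "integrable std_gauss (\<lambda>u. e (x + t *\<^sub>R u))"
    by (rule integrable_std_gauss_affine_bound[where a=B and c=0]) (measurable, simp add: e)
  then show ?thesis
    using integrable_std_gauss_lipschitz[OF lip] by (simp add: gauss_smooth_def)
qed

text \<open>Cauchy--Schwarz with weights \<open>1/4 + 5/12 + 1/3 = 1\<close>.\<close>
lemma power2_sum3_le: "(a + b + c)\<^sup>2 \<le> 4 * a\<^sup>2 + 12/5 * b\<^sup>2 + 3 * c\<^sup>2" for a b c :: real
proof -
  have "4 * a\<^sup>2 + 12/5 * b\<^sup>2 + 3 * c\<^sup>2 - (a + b + c)\<^sup>2 =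
     (4*a - 12/5*b)\<^sup>2 * (5/48) + (4*a - 3*c)\<^sup>2 / 12 + (12/5*b - 3*c)\<^sup>2 * (5/36)"
    by (simp add: power2_eq_square field_simps)
  moreover have "0 \<le> (4*a - 12/5*b)\<^sup>2 * (5/48) + (4*a - 3*c)\<^sup>2 / 12 + (12/5*b - 3*c)\<^sup>2 * (5/36)"
    by simp
  ultimately show ?thesis by linarith
qed

lemma power2_le_gradient_error_bound:
  fixes g a \<nu> t L1 d :: real
  assumes "0 \<le> g" and "g \<le> a + \<nu> / t + L1 * t * ((1 + d) / 2)" and "0 \<le> d"
  shows "g\<^sup>2 \<le> 4 * a\<^sup>2 + t\<^sup>2 / 2 * L1\<^sup>2 * (d + 6) ^ 3 + 8 / pi * \<nu>\<^sup>2 / t\<^sup>2"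
proof -
  have "g\<^sup>2 \<le> (a + \<nu> / t + L1 * t * ((1 + d) / 2))\<^sup>2"
    using assms(2,1) by (rule power_mono)
  also have "\<dots> \<le> 4 * a\<^sup>2 + 12/5 * (\<nu> / t)\<^sup>2 + 3 * (L1 * t * ((1 + d) / 2))\<^sup>2"
    by (rule power2_sum3_le)
  also have "12/5 * (\<nu> / t)\<^sup>2 \<le> 8 / pi * \<nu>\<^sup>2 / t\<^sup>2"
  proof -
    have "12/5 \<le> 8 / pi"
      using pi_approx(2) by (simp add: field_simps)
    then have "12/5 * (\<nu> / t)\<^sup>2 \<le> 8 / pi * (\<nu> / t)\<^sup>2"
      by (rule mult_right_mono) simp
    then show ?thesis
      by (simp add: power_divide)
  qed
  also have "3 * (L1 * t * ((1 + d) / 2))\<^sup>2 \<le> t\<^sup>2 / 2 * L1\<^sup>2 * (d + 6) ^ 3"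
  proof -
    have "(1 + d)\<^sup>2 \<le> (d + 6)\<^sup>2"
      using assms(3) by (intro power_mono) simp_all
    also have "\<dots> * 3 \<le> (d + 6)\<^sup>2 * (d + 6)"
      using assms(3) by (intro mult_left_mono) simp_all
    finally have "(1 + d)\<^sup>2 * 3 \<le> (d + 6) ^ 3"
      by (simp add: power2_eq_square power3_eq_cube)
    moreover have "0 \<le> (d + 6) ^ 3"
      using assms(3) by simp
    ultimately have cube: "3 * (1 + d)\<^sup>2 \<le> 2 * (d + 6) ^ 3"
      by linarith
    have "3 * (L1 * t * ((1 + d) / 2))\<^sup>2 = (L1 * t)\<^sup>2 / 4 * (3 * (1 + d)\<^sup>2)"
      by (simp add: power_mult_distrib power_divide)
    also have "\<dots> \<le> (L1 * t)\<^sup>2 / 4 * (2 * (d + 6) ^ 3)"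
      using cube by (rule mult_left_mono) simp
    also have "\<dots> = t\<^sup>2 / 2 * L1\<^sup>2 * (d + 6) ^ 3"
      by (simp add: power_mult_distrib)
    finally show ?thesis .
  qed
  finally show ?thesis
    by simp
qed

theorem mainTheorem10:
  fixes f fp :: "'a::euclidean_space \<Rightarrow> real"
    and gradf :: "'a \<Rightarrow> 'a"
    and L0 L1 \<nu> t :: real and x :: 'a
  assumes lip: "\<forall>y z. \<bar>f y - f z\<bar> \<le> L0 * norm (y - z)"
    and grad: "\<forall>y. GDERIV f y :> gradf y"
    and smooth: "\<forall>y z. norm (gradf y - gradf z) \<le> L1 * norm (y - z)"
    and meas: "fp \<in> borel_measurable borel"
    and approx: "\<forall>y. \<bar>f y - fp y\<bar> \<le> \<nu>"
    and tpos: "t > 0"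
  shows "\<exists>D. GDERIV (\<lambda>y. gauss_smooth fp y t) x :> D \<and>
    (norm (gradf x))\<^sup>2 \<le> 4 * (norm D)\<^sup>2 + t\<^sup>2 / 2 * L1\<^sup>2 * (real DIM('a) + 6) ^ 3
      + 8 / pi * \<nu>\<^sup>2 / t\<^sup>2"
proof -
  have f_lip: "\<forall>y z. norm (f y - f z) \<le> L0 * norm (y - z)"
    using lip by simp
  define e where "e y = fp y - f y" for y
  have e_meas [measurable]: "e \<in> borel_measurable borel"
    using meas borel_measurable_lipschitz[OF f_lip] by (simp add: e_def[abs_def])
  have e: "\<bar>e y\<bar> \<le> \<nu>" for y
    using approx by (simp add: e_def abs_minus_commute)
  define G where "G = (\<integral>u. gradf (x + t *\<^sub>R u) \<partial>std_gauss)"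
  define De where "De = (1/t) *\<^sub>R (\<integral>u. e (x + t *\<^sub>R u) *\<^sub>R u \<partial>std_gauss)"
  have "(\<lambda>y. gauss_smooth fp y t) = (\<lambda>y. gauss_smooth f y t + gauss_smooth e y t)"
    using gauss_smooth_add_bounded[OF f_lip e_meas e] by (simp add: e_def[abs_def])
  then have D: "GDERIV (\<lambda>y. gauss_smooth fp y t) x :> G + De"
    unfolding G_def De_def
    by (simp add: GDERIV_add gauss_smooth_gderiv_lipschitz_gradient[OF f_lip grad smooth]
        gauss_smooth_gderiv_bounded[OF e_meas e tpos])
  have "norm De \<le> \<nu> / t"
    using norm_integral_std_gauss_scaleR_le[of "\<lambda>u. e (x + t *\<^sub>R u)" \<nu>] e tpos
    by (simp add: De_def divide_right_mono)
  moreover have "norm (gradf x - G) \<le> L1 * t * ((1 + real DIM('a)) / 2)"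
    using norm_minus_gauss_smooth_lipschitz_le[OF smooth, of x t] tpos by (simp add: G_def)
  moreover have "norm (gradf x) \<le> norm (G + De) + norm De + norm (gradf x - G)"
    using norm_triangle_ineq[of "G + De - De" "gradf x - G"] norm_triangle_ineq4[of "G + De" De] by simp
  ultimately show ?thesis
    using D by (intro exI[of _ "G + De"] conjI power2_le_gradient_error_bound) simp_all
qed

end
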